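(* Let $\lambda_2$ be the second smallest eigenvalue of the Laplacian of $G$ and $\psi_c=8\,n\,\Delta\, s_{\max}/\lambda_2$. Suppose $m\ge 8\,\delta\, n^2\,\mathcal{S}\, s_{\max}$ for some $\delta>1$. Then every state $x$ with $\Psi_0(x)\le 4\psi_c$ is a $2/(1+\delta)$-approximate Nash equilibrium.
   Context: $G=(V,E)$ is a connected undirected graph on $n\ge2$ vertices with maximum degree $\Delta$; its Laplacian $L$ has $L_{ii}=\deg(i)$, $L_{ij}=-1$ if $\{i,j\}\in E$, $0$ otherwise. Processor $i$ has speed $s_i>0$, scaled so the smallest speed is $1$; $s_{\max}=\max_i s_i$, $\mathcal{S}=\sum_i s_i$. There are $m$ unit tasks; a state $x$ assigns each task to a processor, $w_i(x)$ is the number of tasks on $i$ and $\ell_i(x)=w_i(x)/s_i$. $\Psi_0(x)=\sum_i (w_i(x)-m s_i/\mathcal{S})^2/s_i$. A state is an $\varepsilon$-approximate Nash equilibrium if $(1-\varepsilon)\ell_i-\ell_j\le 1/s_j$ for every ordered pair $(i,j)$ of adjacent processors. *)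

theory Defs
  imports "Jordan_Normal_Form.Char_Poly" "HOL-Library.Multiset"
begin

definition adj_on :: "nat \<Rightarrow> (nat \<Rightarrow> nat \<Rightarrow> bool) \<Rightarrow> nat \<Rightarrow> nat \<Rightarrow> bool" where
  "adj_on n E i j \<longleftrightarrow> i < n \<and> j < n \<and> E i j"

definition simple_connected_graph :: "nat \<Rightarrow> (nat \<Rightarrow> nat \<Rightarrow> bool) \<Rightarrow> bool" where
  "simple_connected_graph n E \<longleftrightarrow>
     (\<forall>i j. E i j \<longrightarrow> E j i) \<and> (\<forall>i. \<not> E i i) \<and>
     (\<forall>i<n. \<forall>j<n. (adj_on n E)\<^sup>*\<^sup>* i j)"

definition degree :: "nat \<Rightarrow> (nat \<Rightarrow> nat \<Rightarrow> bool) \<Rightarrow> nat \<Rightarrow> nat" where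
  "degree n E i = card {j. j < n \<and> E i j}"

definition max_degree :: "nat \<Rightarrow> (nat \<Rightarrow> nat \<Rightarrow> bool) \<Rightarrow> nat" where
  "max_degree n E = Max (degree n E ` {0..<n})"

definition laplacian :: "nat \<Rightarrow> (nat \<Rightarrow> nat \<Rightarrow> bool) \<Rightarrow> real mat" where
  "laplacian n E = mat n n (\<lambda>(i, j). if i = j then real (degree n E i)
                                      else if E i j then -1 else 0)"

text \<open>Eigenvalues with multiplicity (roots of the characteristic polynomial), sorted
  increasingly; lambda2 is the second smallest one.\<close>

definition lambda2 :: "nat \<Rightarrow> (nat \<Rightarrow> nat \<Rightarrow> bool) \<Rightarrow> real" where
  "lambda2 n E = sorted_list_of_multiset (proots (char_poly (laplacian n E))) ! 1"

definition smax :: "nat \<Rightarrow> (nat \<Rightarrow> real) \<Rightarrow> real" where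
  "smax n s = Max (s ` {0..<n})"

definition total_speed :: "nat \<Rightarrow> (nat \<Rightarrow> real) \<Rightarrow> real" where
  "total_speed n s = (\<Sum>i<n. s i)"

text \<open>A state x assigns each task t < m to a processor x t < n.\<close>

definition valid_state :: "nat \<Rightarrow> nat \<Rightarrow> (nat \<Rightarrow> nat) \<Rightarrow> bool" where
  "valid_state n m x \<longleftrightarrow> (\<forall>t<m. x t < n)"

definition weight :: "nat \<Rightarrow> (nat \<Rightarrow> nat) \<Rightarrow> nat \<Rightarrow> nat" where
  "weight m x i = card {t. t < m \<and> x t = i}"

definition load :: "nat \<Rightarrow> (nat \<Rightarrow> real) \<Rightarrow> (nat \<Rightarrow> nat) \<Rightarrow> nat \<Rightarrow> real" where
  "load m s x i = real (weight m x i) / s i"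

definition Psi0 :: "nat \<Rightarrow> nat \<Rightarrow> (nat \<Rightarrow> real) \<Rightarrow> (nat \<Rightarrow> nat) \<Rightarrow> real" where
  "Psi0 n m s x = (\<Sum>i<n. (real (weight m x i) - real m * s i / total_speed n s)\<^sup>2 / s i)"

definition approx_NE :: "nat \<Rightarrow> (nat \<Rightarrow> nat \<Rightarrow> bool) \<Rightarrow> nat \<Rightarrow> (nat \<Rightarrow> real) \<Rightarrow> real
                           \<Rightarrow> (nat \<Rightarrow> nat) \<Rightarrow> bool" where
  "approx_NE n E m s \<epsilon> x \<longleftrightarrow>
     (\<forall>i<n. \<forall>j<n. E i j \<longrightarrow> (1 - \<epsilon>) * load m s x i - load m s x j \<le> 1 / s j)"

end

theory Submission
  imports Defs "HOL-Library.Transitive_Closure_Table"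
begin

text \<open>
  Every nonzero Laplacian eigenvalue \<open>\<mu>\<close> of a connected graph satisfies
  \<open>\<mu> n (n - 1) \<ge> 1\<close>: an eigenvector \<open>f\<close> sums to zero, so
  \<open>\<Sum>i j. (f i - f j)\<^sup>2 = 2 n \<Sum>i. (f i)\<^sup>2\<close>, while by Cauchy-Schwarz along a simple path
  each \<open>(f i - f j)\<^sup>2\<close> is at most \<open>n - 1\<close> times the Dirichlet energy, which equals
  \<open>2 \<mu> \<Sum>i. (f i)\<^sup>2\<close>. Together with \<open>\<Delta> \<le> n\<close> this gives \<open>4 \<psi>\<^sub>c \<le> K\<^sup>2\<close> for
  \<open>K = 8 n\<^sup>2 smax\<close>. Since all speeds are at least 1, the potential dominates every squared
  deviation \<open>(load i - m / S)\<^sup>2\<close>, so all loads lie within \<open>K\<close> of the average \<open>m / S\<close>;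
  the hypothesis on \<open>m\<close> says \<open>\<delta> K \<le> m / S\<close>, and then
  \<open>(1 - 2 / (1 + \<delta>)) load i \<le> load j\<close> for all \<open>i\<close>, \<open>j\<close>.

  Since \<open>\<lambda>\<^sub>2\<close> is defined as an entry of the sorted list of real roots of the
  characteristic polynomial, it is an eigenvalue only because a real symmetric matrix has
  all its \<open>n\<close> eigenvalues real.
\<close>

lemma symmetric_real_mat_eigenvalue_real:
  fixes A :: "real mat" and a :: complex
  assumes A: "A \<in> carrier_mat n n"
    and sym: "\<And>i j. i < n \<Longrightarrow> j < n \<Longrightarrow> A $$ (i,j) = A $$ (j,i)"
    and ev: "eigenvalue (map_mat complex_of_real A) a"
  shows "a \<in> \<real>"
proof -
  let ?B = "map_mat complex_of_real A"
  obtain v where v: "v \<in> carrier_vec n" "v \<noteq> 0\<^sub>v n" "?B *\<^sub>v v = a \<cdot>\<^sub>v v"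
    using ev A unfolding eigenvalue_def eigenvector_def by auto
  have row: "(\<Sum>j<n. of_real (A $$ (i,j)) * v $ j) = a * v $ i" if "i < n" for i
    using arg_cong[OF v(3), of "\<lambda>w. w $ i"] that A v(1)
    by (auto simp: mult_mat_vec_def scalar_prod_def lessThan_atLeast0)
  define q where "q = (\<Sum>i<n. \<Sum>j<n. cnj (v $ i) * of_real (A $$ (i,j)) * v $ j)"
  define N where "N = (\<Sum>i<n. (cmod (v $ i))\<^sup>2)"
  have "q = (\<Sum>i<n. cnj (v $ i) * (a * v $ i))"
    unfolding q_def by (simp add: row mult.assoc flip: sum_distrib_left)
  also have "\<dots> = a * of_real N"
    unfolding N_def of_real_sum complex_norm_square by (simp add: sum_distrib_left mult_ac)
  finally have "q = a * of_real N" .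
  moreover have "cnj q = q"
  proof -
    have "cnj q = (\<Sum>i<n. \<Sum>j<n. v $ i * of_real (A $$ (i,j)) * cnj (v $ j))"
      unfolding q_def by simp
    also have "\<dots> = (\<Sum>j<n. \<Sum>i<n. cnj (v $ j) * of_real (A $$ (j,i)) * v $ i)"
      by (subst sum.swap) (intro sum.cong refl, simp add: sym mult_ac)
    finally show ?thesis unfolding q_def .
  qed
  moreover have "N > 0"
  proof -
    obtain i where "i < n" "v $ i \<noteq> 0" using v(1,2) by (auto simp: vec_eq_iff)
    thus ?thesis unfolding N_def by (intro sum_pos2[of _ i]) auto
  qed
  ultimately have "cnj a = a" by (simp add: complex_eq_iff)
  thus ?thesis by (simp add: Reals_cnj_iff)
qed

lemma symmetric_real_mat_size_proots_char_poly:
  fixes A :: "real mat"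
  assumes A: "A \<in> carrier_mat n n"
    and sym: "\<And>i j. i < n \<Longrightarrow> j < n \<Longrightarrow> A $$ (i,j) = A $$ (j,i)"
  shows "size (proots (char_poly A)) = n"
proof -
  let ?B = "map_mat complex_of_real A"
  interpret map_poly_inj_idom_hom complex_of_real ..
  obtain as where as: "char_poly ?B = (\<Prod>a\<leftarrow>as. [:- a, 1:])" and len: "length as = n"
    using char_poly_factorized[of ?B n] A by auto
  have real: "a \<in> \<real>" if "a \<in> set as" for a
  proof (rule symmetric_real_mat_eigenvalue_real[OF A sym])
    have "poly (char_poly ?B) a = 0" using that by (simp add: as poly_prod_list prod_list_zero_iff)
    thus "eigenvalue ?B a" using A by (simp add: eigenvalue_root_char_poly)
  qed
  define rs where "rs = map Re as"
  have "map_poly complex_of_real (char_poly A) = map_poly complex_of_real (\<Prod>r\<leftarrow>rs. [:- r, 1:])"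
    using real unfolding of_real_hom.char_poly_hom[OF A, symmetric] as rs_def hom_prod_list
    by (simp add: o_def cong: map_cong)
  then have "char_poly A = (\<Prod>r\<leftarrow>rs. [:- r, 1:])" by (rule injectivity)
  also have "proots \<dots> = mset rs"
  proof (induction rs)
    case (Cons r rs)
    have "(\<Prod>r\<leftarrow>rs. [:- r, 1:]) \<noteq> 0" by (auto simp: prod_list_zero_iff)
    then show ?case using Cons by (simp add: proots_mult del: mult_pCons_left)
  qed simp
  finally show ?thesis using len by (simp add: rs_def)
qed

lemma symmetric_real_mat_sorted_proots_eigenvalue:
  fixes A :: "real mat"
  assumes A: "A \<in> carrier_mat n n"
    and sym: "\<And>i j. i < n \<Longrightarrow> j < n \<Longrightarrow> A $$ (i,j) = A $$ (j,i)"
    and k: "k < n"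
  shows "eigenvalue A (sorted_list_of_multiset (proots (char_poly A)) ! k)"
proof -
  let ?rs = "sorted_list_of_multiset (proots (char_poly A))"
  have size: "size (proots (char_poly A)) = n"
    by (rule symmetric_real_mat_size_proots_char_poly[OF A sym])
  then have "length ?rs = n"
    by (metis mset_sorted_list_of_multiset size_mset)
  then have "?rs ! k \<in> set ?rs" using k by (intro nth_mem) simp
  then have "?rs ! k \<in># proots (char_poly A)" by (simp only: set_sorted_list_of_multiset)
  moreover have "char_poly A \<noteq> 0" using size k by auto
  ultimately show ?thesis
    using A by (simp add: eigenvalue_root_char_poly)
qed

text \<open>Summed over ordered pairs, so every edge is counted twice.\<close>

definition dirichlet_energy :: "nat \<Rightarrow> (nat \<Rightarrow> nat \<Rightarrow> bool) \<Rightarrow> (nat \<Rightarrow> real) \<Rightarrow> real" where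
  "dirichlet_energy n E f = (\<Sum>i<n. \<Sum>j<n. if E i j then (f i - f j)\<^sup>2 else 0)"

lemma dirichlet_energy_eq_sum_edges:
  "dirichlet_energy n E f = (\<Sum>(i,j)\<in>{(i,j). i < n \<and> j < n \<and> E i j}. (f i - f j)\<^sup>2)"
proof -
  have "dirichlet_energy n E f = (\<Sum>(i,j)\<in>{..<n} \<times> {..<n}. if E i j then (f i - f j)\<^sup>2 else 0)"
    unfolding dirichlet_energy_def by (rule sum.cartesian_product)
  also have "\<dots> = (\<Sum>(i,j)\<in>({..<n} \<times> {..<n}) \<inter> {(i,j). E i j}. (f i - f j)\<^sup>2)"
    by (subst sum.inter_restrict) (auto intro!: sum.cong)
  also have "({..<n} \<times> {..<n}) \<inter> {(i,j). E i j} = {(i,j). i < n \<and> j < n \<and> E i j}"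
    by auto
  finally show ?thesis .
qed

lemma power2_add_le_mult_add:
  fixes x y k S :: real
  assumes "y\<^sup>2 \<le> k * S" "0 \<le> S" "0 \<le> k"
  shows "(x + y)\<^sup>2 \<le> (k + 1) * (x\<^sup>2 + S)"
proof (cases "k = 0")
  case True
  then show ?thesis using assms by simp
next
  case False
  have "0 \<le> (k * x - y)\<^sup>2 + k * (k * S - y\<^sup>2)" using assms by simp
  also have "\<dots> \<le> k * ((k + 1) * (x\<^sup>2 + S) - (x + y)\<^sup>2)"
    using assms(1) by (simp add: power2_eq_square algebra_simps)
  finally show ?thesis using False assms(3) by (simp add: zero_le_mult_iff)
qed

lemma rtrancl_path_power2_diff_le:
  fixes f :: "'a \<Rightarrow> real"
  assumes "rtrancl_path r a xs b"
  shows "(f a - f b)\<^sup>2 \<le> real (length xs) * (\<Sum>(p,q)\<leftarrow>zip (a#xs) xs. (f p - f q)\<^sup>2)"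
  using assms
proof induction
  case (step x y ys z)
  have "0 \<le> (\<Sum>(p,q)\<leftarrow>zip (y#ys) ys. (f p - f q)\<^sup>2)"
    by (rule sum_list_nonneg) auto
  then have "((f x - f y) + (f y - f z))\<^sup>2
      \<le> (real (length ys) + 1) * ((f x - f y)\<^sup>2 + (\<Sum>(p,q)\<leftarrow>zip (y#ys) ys. (f p - f q)\<^sup>2))"
    by (intro power2_add_le_mult_add step.IH) simp_all
  then show ?case by (simp add: add.commute)
qed simp

lemma connected_power2_diff_le_dirichlet_energy:
  fixes f :: "nat \<Rightarrow> real"
  assumes G: "simple_connected_graph n E" and i: "i < n" and j: "j < n"
  shows "(f i - f j)\<^sup>2 \<le> (real n - 1) * dirichlet_energy n E f"
proof -
  let ?g = "\<lambda>(p,q). (f p - f q)\<^sup>2"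
  let ?edges = "{(p,q). p < n \<and> q < n \<and> E p q}"
  have "(adj_on n E)\<^sup>*\<^sup>* i j" using G i j unfolding simple_connected_graph_def by auto
  then obtain xs where path: "rtrancl_path (adj_on n E) i xs j" and dist: "distinct (i # xs)"
    by (metis rtranclp_eq_rtrancl_path rtrancl_path_distinct)
  have steps: "set (zip (i # xs) xs) \<subseteq> ?edges" and "set xs \<subseteq> {..<n}"
    using path by (induction) (auto simp: adj_on_def)
  then have "card (set (i # xs)) \<le> n"
    using i by (intro card_mono[where B = "{..<n}", simplified]) auto
  then have len: "real (length xs) \<le> real n - 1"
    using distinct_card[OF dist] by simp
  have "(\<Sum>(p,q)\<leftarrow>zip (i # xs) xs. (f p - f q)\<^sup>2) = sum ?g (set (zip (i # xs) xs))"
    by (rule sum_list_distinct_conv_sum_set[OF distinct_zipI1[OF dist]])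
  also have "\<dots> \<le> sum ?g ?edges"
    by (rule sum_mono2[OF _ steps]) (auto intro: finite_subset[of _ "{..<n} \<times> {..<n}"])
  finally have "(\<Sum>(p,q)\<leftarrow>zip (i # xs) xs. (f p - f q)\<^sup>2) \<le> dirichlet_energy n E f"
    by (simp add: dirichlet_energy_eq_sum_edges)
  moreover have "0 \<le> dirichlet_energy n E f"
    unfolding dirichlet_energy_def by (intro sum_nonneg) auto
  ultimately have "real (length xs) * (\<Sum>(p,q)\<leftarrow>zip (i # xs) xs. (f p - f q)\<^sup>2)
      \<le> (real n - 1) * dirichlet_energy n E f"
    using len by (intro mult_mono) (auto intro!: sum_list_nonneg)
  then show ?thesis
    using rtrancl_path_power2_diff_le[OF path, of f] by linarith
qed

lemma laplacian_mult_vec_nth: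
  assumes loopless: "\<And>i. \<not> E i i" and v: "v \<in> carrier_vec n" and i: "i < n"
  shows "(laplacian n E *\<^sub>v v) $ i = (\<Sum>j<n. if E i j then v $ i - v $ j else 0)"
proof -
  have "(laplacian n E *\<^sub>v v) $ i
      = (\<Sum>j<n. (if j = i then real (degree n E i) * v $ i else 0) - (if E i j then v $ j else 0))"
    using i v loopless
    by (auto simp: laplacian_def mult_mat_vec_def scalar_prod_def lessThan_atLeast0 intro!: sum.cong)
  also have "\<dots> = real (degree n E i) * v $ i - (\<Sum>j<n. if E i j then v $ j else 0)"
    using i by (simp add: sum_subtractf)
  also have "real (degree n E i) * v $ i = (\<Sum>j<n. if E i j then v $ i else 0)"
    by (simp add: degree_def sum.If_cases Int_def)
  finally show ?thesis by (simp add: sum_subtractf[symmetric] if_distrib cong: if_cong)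
qed

lemma sum_sum_edge_diff_eq_0:
  fixes f :: "nat \<Rightarrow> real"
  assumes "symp E"
  shows "(\<Sum>i<n. \<Sum>j<n. if E i j then f i - f j else 0) = 0"
proof -
  let ?X = "\<Sum>i<n. \<Sum>j<n. if E i j then f i - f j else 0"
  have "?X = (\<Sum>i<n. \<Sum>j<n. - (if E i j then f i - f j else 0))"
    using assms by (subst sum.swap) (auto intro!: sum.cong dest: sympD)
  then have "?X = - ?X" by (simp add: sum_negf)
  then show ?thesis by simp
qed

lemma sum_mult_edge_diff_eq_dirichlet_energy:
  fixes f :: "nat \<Rightarrow> real"
  assumes "symp E"
  shows "2 * (\<Sum>i<n. f i * (\<Sum>j<n. if E i j then f i - f j else 0)) = dirichlet_energy n E f"
proof -
  let ?T = "\<Sum>i<n. \<Sum>j<n. if E i j then f i * (f i - f j) else 0"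
  have swap: "?T = (\<Sum>i<n. \<Sum>j<n. if E i j then f j * (f j - f i) else 0)"
    using assms by (subst sum.swap) (auto intro!: sum.cong dest: sympD)
  have "?T + ?T = (\<Sum>i<n. \<Sum>j<n. (if E i j then f i * (f i - f j) else 0)
                                  + (if E i j then f j * (f j - f i) else 0))"
    by (subst (2) swap) (simp add: sum.distrib)
  also have "\<dots> = dirichlet_energy n E f"
    unfolding dirichlet_energy_def by (intro sum.cong refl) (simp add: power2_eq_square algebra_simps)
  finally show ?thesis by (simp add: sum_distrib_left if_distrib cong: if_cong)
qed

lemma sum_sum_power2_diff:
  fixes f :: "'a \<Rightarrow> real"
  shows "(\<Sum>i\<in>A. \<Sum>j\<in>A. (f i - f j)\<^sup>2) = 2 * real (card A) * (\<Sum>i\<in>A. (f i)\<^sup>2) - 2 * (\<Sum>i\<in>A. f i)\<^sup>2"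
  by (simp add: power2_diff sum.distrib sum_subtractf sum_distrib_left sum_distrib_right
      power2_eq_square algebra_simps)

lemma laplacian_nonzero_eigenvalue_ge:
  assumes G: "simple_connected_graph n E"
    and ev: "eigenvalue (laplacian n E) \<mu>" and \<mu>: "\<mu> \<noteq> 0"
  shows "1 \<le> \<mu> * real n * (real n - 1)"
proof -
  have sym: "symp E" and loopless: "\<And>i. \<not> E i i"
    using G unfolding simple_connected_graph_def symp_def by blast+
  obtain v where v: "v \<in> carrier_vec n" "v \<noteq> 0\<^sub>v n" "laplacian n E *\<^sub>v v = \<mu> \<cdot>\<^sub>v v"
    using ev unfolding eigenvalue_def eigenvector_def by (auto simp: laplacian_def)
  define f where "f i = v $ i" for i
  have row: "(\<Sum>j<n. if E i j then f i - f j else 0) = \<mu> * f i" if "i < n" for i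
    using laplacian_mult_vec_nth[where E = E, OF loopless v(1) that] v(3) that v(1)
    unfolding f_def by simp
  have "\<mu> * (\<Sum>i<n. f i) = 0"
    using sum_sum_edge_diff_eq_0[OF sym, where n = n and f = f] by (simp add: row sum_distrib_left)
  then have sum0: "(\<Sum>i<n. f i) = 0" using \<mu> by simp
  have energy: "dirichlet_energy n E f = 2 * \<mu> * (\<Sum>i<n. (f i)\<^sup>2)"
    using sum_mult_edge_diff_eq_dirichlet_energy[OF sym, where n = n and f = f]
    by (simp add: row sum_distrib_left power2_eq_square mult_ac)
  obtain i0 where "i0 < n" "f i0 \<noteq> 0" using v(1,2) by (auto simp: vec_eq_iff f_def)
  then have pos: "0 < (\<Sum>i<n. (f i)\<^sup>2)" and n: "0 < real n"
    by (auto intro!: sum_pos2[of _ i0])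
  have "2 * real n * (\<Sum>i<n. (f i)\<^sup>2) = (\<Sum>i<n. \<Sum>j<n. (f i - f j)\<^sup>2)"
    using sum_sum_power2_diff[of f "{..<n}"] by (simp add: sum0)
  also have "\<dots> \<le> (\<Sum>i<n. \<Sum>j<n. (real n - 1) * dirichlet_energy n E f)"
    by (intro sum_mono connected_power2_diff_le_dirichlet_energy[OF G]) auto
  also have "\<dots> = real n * (\<mu> * real n * (real n - 1)) * (2 * (\<Sum>i<n. (f i)\<^sup>2))"
    by (simp add: energy mult_ac)
  finally show ?thesis using pos n by (simp add: mult_le_cancel_left_pos)
qed

lemma max_degree_le:
  assumes "0 < n"
  shows "max_degree n E \<le> n"
proof -
  have "degree n E i \<le> n" for i
    unfolding degree_def by (rule card_mono[where B = "{..<n}", simplified]) auto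
  then show ?thesis using assms unfolding max_degree_def by simp
qed

lemma laplacian_symmetric:
  assumes "symp E" "i < n" "j < n"
  shows "laplacian n E $$ (i,j) = laplacian n E $$ (j,i)"
  using assms by (auto simp: laplacian_def dest: sympD)

lemma lambda2_eigenvalue:
  assumes "symp E" "2 \<le> n"
  shows "eigenvalue (laplacian n E) (lambda2 n E)"
  unfolding lambda2_def using assms
  by (intro symmetric_real_mat_sorted_proots_eigenvalue laplacian_symmetric)
     (auto simp: laplacian_def)

lemma Psi0_threshold_le:
  fixes sm :: real
  assumes G: "simple_connected_graph n E" and n: "2 \<le> n" and sm: "1 \<le> sm"
  shows "4 * (8 * real n * real (max_degree n E) * sm / lambda2 n E) \<le> (8 * real n ^ 2 * sm)\<^sup>2"
proof (cases "lambda2 n E > 0")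
  case True
  have "symp E" using G unfolding simple_connected_graph_def symp_def by blast
  then have "1 \<le> lambda2 n E * real n * (real n - 1)"
    using True n by (intro laplacian_nonzero_eigenvalue_ge[OF G] lambda2_eigenvalue) auto
  then have "1 / lambda2 n E \<le> real n * (real n - 1)"
    using True by (simp add: divide_le_eq mult_ac)
  also have "\<dots> \<le> real n * real n" by (intro mult_left_mono) auto
  finally have inv: "1 / lambda2 n E \<le> real n * real n" .
  have "real (max_degree n E) \<le> real n" using max_degree_le[of n E] n by simp
  then have bound: "real (max_degree n E) * sm * (1 / lambda2 n E) \<le> real n * sm * (real n * real n)"
    using inv sm True by (intro mult_mono) auto
  have "4 * (8 * real n * real (max_degree n E) * sm / lambda2 n E)
      = 32 * real n * (real (max_degree n E) * sm * (1 / lambda2 n E))"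
    by simp
  also have "\<dots> \<le> 32 * real n * (real n * sm * (real n * real n))"
    using bound by (rule mult_left_mono) simp
  also have "\<dots> \<le> (8 * real n ^ 2 * sm)\<^sup>2"
  proof -
    have "1 * (32 * sm * real n ^ 4) \<le> (2 * sm) * (32 * sm * real n ^ 4)"
      using sm by (intro mult_right_mono) auto
    then show ?thesis by (simp add: power2_eq_square power4_eq_xxxx mult_ac)
  qed
  finally show ?thesis .
next
  case False
  then have "8 * real n * real (max_degree n E) * sm / lambda2 n E \<le> 0"
    using sm by (intro divide_nonneg_nonpos) auto
  then show ?thesis using zero_le_power2[of "8 * real n ^ 2 * sm"] by linarith
qed

lemma load_deviation_le_Psi0:
  assumes pos: "\<forall>i<n. 0 < s i" and k: "k < n" and sk: "1 \<le> s k"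
  shows "(load m s x k - real m / total_speed n s)\<^sup>2 \<le> Psi0 n m s x"
proof -
  define e where "e = real (weight m x k) - real m * s k / total_speed n s"
  have "(load m s x k - real m / total_speed n s)\<^sup>2 = e\<^sup>2 / s k / s k"
    using sk by (simp add: e_def load_def power2_eq_square field_simps)
  also have "\<dots> \<le> e\<^sup>2 / s k"
    using sk by (simp add: divide_le_eq mult_le_cancel_left1)
  also have "\<dots> \<le> Psi0 n m s x"
    unfolding Psi0_def e_def using k pos
    by (intro member_le_sum[where f = "\<lambda>i. (real (weight m x i) - real m * s i / total_speed n s)\<^sup>2 / s i"])
       auto
  finally show ?thesis .
qed

lemma approx_NE_if_loads_near:
  fixes A K \<delta> :: real
  assumes \<delta>: "1 < \<delta>" and AK: "\<delta> * K \<le> A" and pos: "\<forall>i<n. 0 < s i"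
    and near: "\<And>k. k < n \<Longrightarrow> \<bar>load m s x k - A\<bar> \<le> K"
  shows "approx_NE n E m s (2 / (1 + \<delta>)) x"
  unfolding approx_NE_def
proof (intro allI impI)
  fix i j assume i: "i < n" and j: "j < n"
  have "(1 + \<delta>) * ((1 - 2 / (1 + \<delta>)) * load m s x i - load m s x j)
      = (\<delta> - 1) * load m s x i - (1 + \<delta>) * load m s x j"
    using \<delta> by (simp add: field_simps)
  also have "\<dots> \<le> (\<delta> - 1) * (A + K) - (1 + \<delta>) * (A - K)"
    using near[OF i] near[OF j] \<delta> by (intro diff_mono mult_left_mono) auto
  also have "\<dots> \<le> 0" using AK by (simp add: algebra_simps)
  finally have "(1 - 2 / (1 + \<delta>)) * load m s x i - load m s x j \<le> 0"
    using \<delta> by (simp add: mult_le_0_iff)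
  also have "0 \<le> 1 / s j" using pos[rule_format, OF j] by simp
  finally show "(1 - 2 / (1 + \<delta>)) * load m s x i - load m s x j \<le> 1 / s j" .
qed

theorem lemma20:
  fixes n m :: nat and E :: "nat \<Rightarrow> nat \<Rightarrow> bool" and s :: "nat \<Rightarrow> real"
    and x :: "nat \<Rightarrow> nat" and \<delta> :: real
  assumes "n \<ge> 2"
    and "simple_connected_graph n E"
    and "\<forall>i<n. s i \<ge> 1" and "\<exists>i<n. s i = 1"
    and "\<delta> > 1"
    and "real m \<ge> 8 * \<delta> * real n ^ 2 * total_speed n s * smax n s"
    and "valid_state n m x"
    and "Psi0 n m s x \<le> 4 * (8 * real n * real (max_degree n E) * smax n s / lambda2 n E)"
  shows "approx_NE n E m s (2 / (1 + \<delta>)) x"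
proof -
  note n = assms(1) and G = assms(2) and s1 = assms(3) and \<delta> = assms(5) and m = assms(6)
  define K where "K = 8 * real n ^ 2 * smax n s"
  have pos: "\<forall>i<n. 0 < s i" using s1 by force
  have "s 0 \<le> smax n s" unfolding smax_def using n by (intro Max_ge) auto
  then have sm: "1 \<le> smax n s" using s1 n by force
  have "s 0 \<le> total_speed n s" unfolding total_speed_def using n pos
    by (intro member_le_sum) (auto intro: less_imp_le)
  then have S: "0 < total_speed n s" using s1 n by force
  have Psi0: "Psi0 n m s x \<le> K\<^sup>2"
    using assms(8) Psi0_threshold_le[OF G n sm] unfolding K_def by linarith
  have near: "\<bar>load m s x k - real m / total_speed n s\<bar> \<le> K" if "k < n" for k
  proof (rule power2_le_imp_le)
    show "\<bar>load m s x k - real m / total_speed n s\<bar>\<^sup>2 \<le> K\<^sup>2"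
      using order_trans[OF load_deviation_le_Psi0[OF pos that] Psi0] s1 that by simp
    show "0 \<le> K" using sm by (simp add: K_def)
  qed
  have "\<delta> * K \<le> real m / total_speed n s"
    using m S unfolding K_def by (simp add: le_divide_eq mult_ac)
  from approx_NE_if_loads_near[OF \<delta> this pos near] show ?thesis .
qed

end
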